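(* Let $r\ge3$, $n>r$, and $1<i<r$. In $T$ define $\zeta(T_{s_j})=(vF_jE_j-1)1_\omega$ for $1\le j<r$ and $\zeta(T_\rho)=(E_rE_{r+1}\cdots E_{n-1})(E_{r-1}E_{r-2}\cdots E_1)E_n1_\omega$. Then $\zeta(T_{s_{i-1}})\zeta(T_\rho)=\zeta(T_\rho)\zeta(T_{s_i})$.
   Context: $T$ is the $\mathbb{Q}(v)$-algebra with generators $E_i,F_i,K_i^{\pm1}$ ($1\le i\le n$, indices mod $n$) and relations: $K_iK_j=K_jK_i$; $K_iK_i^{-1}=K_i^{-1}K_i=1$; $K_iE_j=v^{\epsilon^+(i,j)}E_jK_i$; $K_iF_j=v^{-\epsilon^+(i,j)}F_jK_i$ ($\epsilon^+(i,j)=1$ if $j=i$, $-1$ if $j\equiv i-1\pmod n$, $0$ otherwise); $E_iF_j-F_jE_i=\delta_{ij}\frac{K_iK_{i+1}^{-1}-K_i^{-1}K_{i+1}}{v-v^{-1}}$; $E_iE_j=E_jE_i$, $F_iF_j=F_jF_i$ if $i-j\not\equiv\pm1$; $E_i^2E_j-(v+v^{-1})E_iE_jE_i+E_jE_i^2=0$, $F_i^2F_j-(v+v^{-1})F_iF_jF_i+F_jF_i^2=0$ if $i-j\equiv\pm1\pmod n$; $K_1\cdots K_n=v^r$; $\prod_{j=0}^r(K_i-v^j)=0$. For a composition $\lambda$ of $r$ into $n$ nonnegative parts, $1_\lambda=\prod_{i=1}^n\prod_{s=1}^{\lambda_i}\frac{K_iv^{-s+1}-K_i^{-1}v^{s-1}}{v^s-v^{-s}}$;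 $\omega=(1,\dots,1,0,\dots,0)$ with $r$ ones and $n-r$ zeros. *)

theory Defs
  imports "HOL-Computational_Algebra.Polynomial" "HOL-Computational_Algebra.Fraction_Field"
begin

type_synonym qv = "rat poly fract"

definition vv :: qv where "vv = Fract [:0, 1:] 1"

definition qv_algebra :: "(qv \<Rightarrow> 'a::ring_1) \<Rightarrow> bool" where
  "qv_algebra sc \<longleftrightarrow> sc 1 = 1 \<and> (\<forall>a b. sc (a + b) = sc a + sc b)
     \<and> (\<forall>a b. sc (a * b) = sc a * sc b) \<and> (\<forall>a x. sc a * x = x * sc a)"

definition nxt :: "nat \<Rightarrow> nat \<Rightarrow> nat" where "nxt n i = (if i = n then 1 else i + 1)"
definition prv :: "nat \<Rightarrow> nat \<Rightarrow> nat" where "prv n i = (if i = 1 then n else i - 1)"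

definition epsp :: "nat \<Rightarrow> nat \<Rightarrow> nat \<Rightarrow> int" where
  "epsp n i j = (if j = i then 1 else if j = prv n i then -1 else 0)"

text \<open>The defining relations of T (with K i^{-1} written Ki i), for indices in {1..n}.\<close>
definition T_relations ::
  "(qv \<Rightarrow> 'a::ring_1) \<Rightarrow> nat \<Rightarrow> nat \<Rightarrow> (nat \<Rightarrow> 'a) \<Rightarrow> (nat \<Rightarrow> 'a) \<Rightarrow> (nat \<Rightarrow> 'a) \<Rightarrow> (nat \<Rightarrow> 'a) \<Rightarrow> bool"
  where
  "T_relations sc n r E F K Ki \<longleftrightarrow>
     (\<forall>i\<in>{1..n}. \<forall>j\<in>{1..n}. K i * K j = K j * K i) \<and>
     (\<forall>i\<in>{1..n}. K i * Ki i = 1 \<and> Ki i * K i = 1) \<and>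
     (\<forall>i\<in>{1..n}. \<forall>j\<in>{1..n}. K i * E j = sc (vv powi epsp n i j) * E j * K i) \<and>
     (\<forall>i\<in>{1..n}. \<forall>j\<in>{1..n}. K i * F j = sc (vv powi (- epsp n i j)) * F j * K i) \<and>
     (\<forall>i\<in>{1..n}. \<forall>j\<in>{1..n}. E i * F j - F j * E i =
         (if i = j then sc (inverse (vv - inverse vv)) * (K i * Ki (nxt n i) - Ki i * K (nxt n i))
          else 0)) \<and>
     (\<forall>i\<in>{1..n}. \<forall>j\<in>{1..n}. j \<noteq> nxt n i \<and> j \<noteq> prv n i \<longrightarrow>
         E i * E j = E j * E i \<and> F i * F j = F j * F i) \<and>
     (\<forall>i\<in>{1..n}. \<forall>j\<in>{1..n}. j = nxt n i \<or> j = prv n i \<longrightarrow>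
         E i * E i * E j - sc (vv + inverse vv) * E i * E j * E i + E j * E i * E i = 0 \<and>
         F i * F i * F j - sc (vv + inverse vv) * F i * F j * F i + F j * F i * F i = 0) \<and>
     prod_list (map K [1..<n+1]) = sc (vv ^ r) \<and>
     (\<forall>i\<in>{1..n}. prod_list (map (\<lambda>j. K i - sc (vv ^ j)) [0..<r+1]) = 0)"

text \<open>The idempotent 1_lambda for a composition lambda (given as a function on {1..n}).\<close>
definition one_lam ::
  "(qv \<Rightarrow> 'a::ring_1) \<Rightarrow> nat \<Rightarrow> (nat \<Rightarrow> 'a) \<Rightarrow> (nat \<Rightarrow> 'a) \<Rightarrow> (nat \<Rightarrow> nat) \<Rightarrow> 'a" where
  "one_lam sc n K Ki lam = prod_list (map (\<lambda>i. prod_list (map (\<lambda>s.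
       (K i * sc (vv powi (1 - int s)) - Ki i * sc (vv powi (int s - 1)))
         * sc (inverse (vv ^ s - inverse (vv ^ s)))) [1..<lam i + 1])) [1..<n+1])"

definition omega :: "nat \<Rightarrow> nat \<Rightarrow> nat" where "omega r i = (if i \<le> r then 1 else 0)"

definition zeta_s :: "(qv \<Rightarrow> 'a::ring_1) \<Rightarrow> nat \<Rightarrow> nat \<Rightarrow> (nat \<Rightarrow> 'a) \<Rightarrow> (nat \<Rightarrow> 'a) \<Rightarrow> (nat \<Rightarrow> 'a) \<Rightarrow> (nat \<Rightarrow> 'a) \<Rightarrow> nat \<Rightarrow> 'a" where
  "zeta_s sc n r E F K Ki j = (sc vv * F j * E j - 1) * one_lam sc n K Ki (omega r)"

definition zeta_rho :: "(qv \<Rightarrow> 'a::ring_1) \<Rightarrow> nat \<Rightarrow> nat \<Rightarrow> (nat \<Rightarrow> 'a) \<Rightarrow> (nat \<Rightarrow> 'a) \<Rightarrow> (nat \<Rightarrow> 'a) \<Rightarrow> 'a" where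
  "zeta_rho sc n r E K Ki = prod_list (map E [r..<n]) * prod_list (map E (rev [1..<r])) * E n
      * one_lam sc n K Ki (omega r)"

end

theory Submission
  imports Defs
begin

(*
  Write P = 1_omega.  Every K_i satisfies prod_{j=0..r} (K_i - v^j) = 0, and for i <= r the
  factor K_i - K_i^-1 of P kills the eigenvalue v^0, so on P the eigenvalues of K_i are powers
  v^k with k >= omega_i.  Since K_1 ... K_n = v^r = v^(sum_i omega_i), a joint eigenspace
  decomposition forces K_i P = v^(omega_i) P: P is a weight vector of weight omega, and it acts as
  the identity on vectors of weight omega.

  The word in zeta(T_rho) contains every E_j exactly once, so it preserves weight omega.
  With a = i - 1, the element F_a E_a commutes with all letters of the word before E_i E_a, and
  F_i E_i with all letters after it.  The corollary thus reduces to
    F_a E_a E_i E_a Y = E_i E_a F_i E_i Y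
  for a vector Y whose weight mu has mu_a = 0 and mu_i = mu_(i+1) = 1.  Both sides equal
  E_a E_i Y: this follows from E_j F_j - F_j E_j = [mu_j - mu_(j+1)] on weight vectors, from the
  vanishing of vectors with a weight outside {0..r}, and, on the right, from the Serre relation.
*)

lemma commute_prod_list:
  fixes C :: "'a::monoid_mult"
  shows "(\<And>y. y \<in> set ys \<Longrightarrow> C * y = y * C) \<Longrightarrow> C * prod_list ys = prod_list ys * C"
  by (induct ys) (simp_all, metis mult.assoc)

lemma left_annihilates_prod_list:
  fixes z :: "'a::semiring_1"
  assumes "z * g = 0" "g \<in> set gs" "\<And>h. h \<in> set gs \<Longrightarrow> z * h = h * z"
  shows "z * prod_list gs = 0"
proof -
  obtain xs ys where gs: "gs = xs @ g # ys"
    using split_list[OF assms(2)] by blast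
  have "z * prod_list xs = prod_list xs * z"
    using assms(3) by (intro commute_prod_list) (simp add: gs)
  have "z * prod_list gs = (z * prod_list xs) * (g * prod_list ys)"
    by (simp add: gs mult.assoc)
  also have "\<dots> = prod_list xs * ((z * g) * prod_list ys)"
    by (simp add: \<open>z * prod_list xs = prod_list xs * z\<close> mult.assoc)
  finally show ?thesis
    using assms(1) by simp
qed

lemma prod_list_fixes:
  fixes y :: "'a::monoid_mult"
  shows "(\<And>g. g \<in> set gs \<Longrightarrow> g * y = y) \<Longrightarrow> prod_list gs * y = y"
  by (induct gs) (simp_all add: mult.assoc)

lemma inj_power_int_nonzero:
  fixes q :: "'a::field"
  assumes "inj (power_int q)"
  shows "q \<noteq> 0"
proof
  assume "q = 0"
  then have "(1::int) = 2"
    by (intro injD[OF assms]) simp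
  then show False
    by simp
qed

section \<open>Commuting operators with a prescribed product\<close>

locale central_scalars =
  fixes sc :: "'k::field \<Rightarrow> 'a::ring_1"
  assumes sc_1 [simp]: "sc 1 = 1"
    and sc_add [simp]: "sc (a + b) = sc a + sc b"
    and sc_mult [simp]: "sc (a * b) = sc a * sc b"
    and sc_central: "sc a * x = x * sc a"
begin

lemma sc_0 [simp]: "sc 0 = 0"
  using sc_add[of 0 0] by simp

lemma sc_uminus [simp]: "sc (- a) = - sc a"
  using sc_add[of a "- a"] by (simp add: eq_neg_iff_add_eq_0 add.commute)

lemma sc_diff [simp]: "sc (a - b) = sc a - sc b"
  using sc_add[of "a - b" b] by (simp add: eq_diff_eq)

lemma sc_left_commute: "x * (sc a * y) = sc a * (x * y)"
  by (metis mult.assoc sc_central)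

lemma sc_commute: "sc a * (sc b * x) = sc b * (sc a * x)"
  by (metis mult.assoc mult.commute sc_mult)

lemma sc_inverse_cancel: "c \<noteq> 0 \<Longrightarrow> sc (inverse c) * (sc c * x) = x"
proof -
  assume "c \<noteq> 0"
  have "sc (inverse c) * (sc c * x) = sc (inverse c * c) * x"
    by (simp add: mult.assoc)
  with \<open>c \<noteq> 0\<close> show ?thesis
    by simp
qed

lemma sc_mult_eq_0: "c \<noteq> 0 \<Longrightarrow> sc c * x = 0 \<Longrightarrow> x = 0"
  by (metis mult_zero_right sc_inverse_cancel)

lemma commute_prod_list_minus_sc:
  "C * A = A * C \<Longrightarrow> C * prod_list (map (\<lambda>k. A - sc (f k)) ks) = prod_list (map (\<lambda>k. A - sc (f k)) ks) * C"
  by (rule commute_prod_list) (auto simp: right_diff_distrib left_diff_distrib sc_central[of _ C])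

lemma eigen_decomposition:
  assumes "distinct ks" and "inj_on ev (set ks)"
  shows "\<exists>R. (\<forall>x. prod_list (map (\<lambda>k. A - sc (ev k)) ks) * x = 0 \<longrightarrow>
                 x = (\<Sum>k\<in>set ks. R k * x) \<and> (\<forall>k\<in>set ks. A * (R k * x) = sc (ev k) * (R k * x)))
           \<and> (\<forall>C k. C * A = A * C \<longrightarrow> C * R k = R k * C)"
  using assms
proof (induction ks rule: rev_induct)
  case Nil
  show ?case
    by (rule exI[of _ "\<lambda>_. 0"]) simp
next
  case (snoc k0 ks)
  then have "distinct ks" "inj_on ev (set ks)"
    by (auto simp: inj_on_Un)
  then obtain R' where
    R'_decomp: "\<And>y. prod_list (map (\<lambda>k. A - sc (ev k)) ks) * y = 0 \<Longrightarrow>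
       y = (\<Sum>k\<in>set ks. R' k * y) \<and> (\<forall>k\<in>set ks. A * (R' k * y) = sc (ev k) * (R' k * y))"
    and R'_commute: "\<And>C k. C * A = A * C \<Longrightarrow> C * R' k = R' k * C"
    using snoc.IH by blast
  have k0: "k0 \<notin> set ks" "\<And>k. k \<in> set ks \<Longrightarrow> ev k \<noteq> ev k0"
    using snoc.prems by (auto simp: inj_on_def)
  define S where "S k = sc (inverse (ev k - ev k0)) * R' k * (A - sc (ev k0))" for k
  define R where "R k = (if k = k0 then 1 - (\<Sum>k'\<in>set ks. S k') else S k)" for k
  show ?case
  proof (intro exI[of _ R] conjI allI impI)
    fix C k
    assume C: "C * A = A * C"
    have "C * S k = S k * C" for k
    proof -
      have "C * S k = sc (inverse (ev k - ev k0)) * (C * R' k) * (A - sc (ev k0))"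
        by (simp add: S_def sc_left_commute[of C] mult.assoc)
      also have "\<dots> = sc (inverse (ev k - ev k0)) * R' k * (C * (A - sc (ev k0)))"
        by (simp add: R'_commute[OF C] mult.assoc)
      also have "\<dots> = S k * C"
        by (simp add: S_def C right_diff_distrib left_diff_distrib sc_central[of _ C] mult.assoc)
      finally show ?thesis .
    qed
    then show "C * R k = R k * C"
      by (simp add: R_def right_diff_distrib left_diff_distrib sum_distrib_left sum_distrib_right)
  next
    fix x
    assume "prod_list (map (\<lambda>k. A - sc (ev k)) (ks @ [k0])) * x = 0"
    define y where "y = (A - sc (ev k0)) * x"
    have "prod_list (map (\<lambda>k. A - sc (ev k)) ks) * y = 0"
      using \<open>prod_list _ * x = 0\<close> by (simp add: y_def mult.assoc)
    from R'_decomp[OF this] have y_sum: "y = (\<Sum>k\<in>set ks. R' k * y)"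
      and y_eigen: "\<And>k. k \<in> set ks \<Longrightarrow> A * (R' k * y) = sc (ev k) * (R' k * y)"
      by auto
    have Sx: "S k * x = sc (inverse (ev k - ev k0)) * (R' k * y)" for k
      by (simp add: S_def y_def mult.assoc)
    have S_eigen: "A * (S k * x) = sc (ev k) * (S k * x)" if "k \<in> set ks" for k
      using y_eigen[OF that] by (simp add: Sx sc_left_commute[of A] sc_left_commute[of "sc (ev k)"])
    have S_shift: "(A - sc (ev k0)) * (S k * x) = R' k * y" if "k \<in> set ks" for k
    proof -
      have "(A - sc (ev k0)) * (S k * x) = sc (inverse (ev k - ev k0)) * ((A - sc (ev k0)) * (R' k * y))"
        by (simp add: Sx sc_left_commute[of "A - sc (ev k0)"])
      also have "\<dots> = sc (inverse (ev k - ev k0)) * (sc (ev k - ev k0) * (R' k * y))"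
        using y_eigen[OF that] by (simp add: left_diff_distrib)
      finally show ?thesis
        using k0(2)[OF that] sc_inverse_cancel[of "ev k - ev k0" "R' k * y"] by simp
    qed
    have "(A - sc (ev k0)) * (R k0 * x) = y - (\<Sum>k\<in>set ks. (A - sc (ev k0)) * (S k * x))"
      by (simp add: R_def y_def left_diff_distrib right_diff_distrib sum_distrib_left sum_distrib_right mult.assoc)
    also have "\<dots> = 0"
      using S_shift y_sum by simp
    finally show "\<forall>k\<in>set (ks @ [k0]). A * (R k * x) = sc (ev k) * (R k * x)"
      using S_eigen k0(1) by (auto simp: R_def left_diff_distrib)
    have "(\<Sum>k\<in>set ks. R k * x) = (\<Sum>k\<in>set ks. S k * x)"
      using k0(1) by (intro sum.cong) (auto simp: R_def)
    then show "x = (\<Sum>k\<in>set (ks @ [k0]). R k * x)"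
      using k0(1) by (simp add: R_def left_diff_distrib sum_distrib_right)
  qed
qed

definition eigen_above :: "'k \<Rightarrow> 'a \<Rightarrow> int \<Rightarrow> 'a \<Rightarrow> bool" where
  "eigen_above q A c x \<longleftrightarrow>
     (\<exists>ks. distinct ks \<and> (\<forall>k\<in>set ks. c \<le> k) \<and> prod_list (map (\<lambda>k. A - sc (q powi k)) ks) * x = 0)"

lemma eigen_above_mult:
  assumes "eigen_above q A c x" and "R * A = A * R"
  shows "eigen_above q A c (R * x)"
proof -
  obtain ks where "distinct ks" "\<forall>k\<in>set ks. c \<le> k"
    and "prod_list (map (\<lambda>k. A - sc (q powi k)) ks) * x = 0"
    using assms(1) by (auto simp: eigen_above_def)
  moreover have "prod_list (map (\<lambda>k. A - sc (q powi k)) ks) * (R * x)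
      = R * (prod_list (map (\<lambda>k. A - sc (q powi k)) ks) * x)"
    by (simp add: commute_prod_list_minus_sc[OF assms(2), symmetric] flip: mult.assoc)
  ultimately show ?thesis
    by (auto simp: eigen_above_def)
qed

lemma eigenvalue_of_cofactor:
  assumes "A * B = B * A" and "A * y = sc (q powi k) * y" and "(A * B) * y = sc (q powi s) * y"
    and "q \<noteq> 0"
  shows "B * y = sc (q powi (s - k)) * y"
proof -
  have "sc (q powi k) * (B * y) = B * (A * y)"
    using assms(2) by (simp add: sc_left_commute[of B])
  also have "\<dots> = (A * B) * y"
    by (metis assms(1) mult.assoc)
  also have "\<dots> = sc (q powi s) * y"
    by (rule assms(3))
  finally have "sc (q powi k) * (B * y) = sc (q powi s) * y" .
  then have "B * y = sc (inverse (q powi k)) * (sc (q powi s) * y)"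
    using sc_inverse_cancel[of "q powi k" "B * y"] \<open>q \<noteq> 0\<close> by simp
  also have "\<dots> = sc (inverse (q powi k) * q powi s) * y"
    by (simp only: sc_mult mult.assoc)
  also have "inverse (q powi k) * q powi s = q powi (s - k)"
    using \<open>q \<noteq> 0\<close> by (simp add: power_int_diff divide_inverse mult.commute)
  finally show ?thesis .
qed

lemma sum_eigenvectors:
  "(\<And>k. k \<in> K \<Longrightarrow> M * y k = sc a * y k) \<Longrightarrow> M * (\<Sum>k\<in>K. y k) = sc a * (\<Sum>k\<in>K. y k)"
  by (simp add: sum_distrib_left)

lemma eigen_above_decomposition:
  assumes q: "inj (power_int q)" and "eigen_above q A c x"
  obtains K R where "finite K" "\<And>k. k \<in> K \<Longrightarrow> c \<le> k" "x = (\<Sum>k\<in>K. R k * x)"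
    "\<And>k. k \<in> K \<Longrightarrow> A * (R k * x) = sc (q powi k) * (R k * x)"
    "\<And>C k. C * A = A * C \<Longrightarrow> C * R k = R k * C"
proof -
  obtain ks where ks: "distinct ks" "\<forall>k\<in>set ks. c \<le> k"
    and "prod_list (map (\<lambda>k. A - sc (q powi k)) ks) * x = 0"
    using assms(2) by (auto simp: eigen_above_def)
  with eigen_decomposition[OF ks(1) inj_on_subset[OF q subset_UNIV], of A] show ?thesis
    using that[of "set ks"] by blast
qed

lemma eigen_component_inherits:
  assumes R: "\<And>C. C * A j = A j * C \<Longrightarrow> C * R = R * C"
    and comm: "\<forall>i\<in>set (j # js). \<forall>i'\<in>set (j # js). A i * A i' = A i' * A i"
    and bounds: "\<forall>i\<in>set js. eigen_above q (A i) (c i) x"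
    and prod: "prod_list (map A (j # js)) * x = sc (q powi s) * x"
    and eigen: "A j * (R * x) = sc (q powi k) * (R * x)" and "q \<noteq> 0"
  shows "\<forall>i\<in>set js. eigen_above q (A i) (c i) (R * x)"
    and "prod_list (map A js) * (R * x) = sc (q powi (s - k)) * (R * x)"
proof -
  show "\<forall>i\<in>set js. eigen_above q (A i) (c i) (R * x)"
  proof
    fix i
    assume i: "i \<in> set js"
    then have "A i * A j = A j * A i"
      using comm by (meson list.set_intros)
    then have "A i * R = R * A i"
      by (rule R)
    then show "eigen_above q (A i) (c i) (R * x)"
      using bounds i by (intro eigen_above_mult) auto
  qed
  define B where "B = prod_list (map A js)"
  have AB: "A j * B = B * A j"
    unfolding B_def using comm by (intro commute_prod_list) auto
  then have "(A j * B) * A j = A j * (A j * B)"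
    by (metis mult.assoc)
  then have "(A j * B) * R = R * (A j * B)"
    by (rule R)
  then have "(A j * B) * (R * x) = R * ((A j * B) * x)"
    by (metis mult.assoc)
  also have "\<dots> = sc (q powi s) * (R * x)"
    using prod by (simp add: B_def sc_left_commute[of R])
  finally show "prod_list (map A js) * (R * x) = sc (q powi (s - k)) * (R * x)"
    using eigenvalue_of_cofactor[OF AB eigen _ \<open>q \<noteq> 0\<close>] by (simp add: B_def)
qed

text \<open>Induction along \<open>js\<close>: split \<open>x\<close> into eigenvectors of the first operator; the lower
  bounds kill every component except the one with the least admissible eigenvalue.\<close>
lemma joint_eigenvalues_from_product:
  assumes q: "inj (power_int q)"
  shows "\<lbrakk>\<forall>i\<in>set js. \<forall>j\<in>set js. A i * A j = A j * A i;
          \<forall>j\<in>set js. eigen_above q (A j) (c j) x;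
          prod_list (map A js) * x = sc (q powi s) * x; s \<le> sum_list (map c js)\<rbrakk>
         \<Longrightarrow> (s < sum_list (map c js) \<longrightarrow> x = 0) \<and> (\<forall>j\<in>set js. A j * x = sc (q powi c j) * x)"
proof (induction js arbitrary: x s)
  case Nil
  have "sc (q powi s - 1) * x = 0"
    by (simp add: left_diff_distrib Nil.prems(3)[symmetric])
  moreover have "s < 0 \<Longrightarrow> q powi s - 1 \<noteq> 0"
    using q by (metis eq_iff_diff_eq_0 inj_eq less_irrefl power_int_0_right)
  ultimately show ?case
    using sc_mult_eq_0[of "q powi s - 1" x] by auto
next
  case (Cons j js)
  define S where "S = sum_list (map c js)"
  have "eigen_above q (A j) (c j) x"
    using Cons.prems(2) by simp
  then obtain K R where K: "finite K" "\<And>k. k \<in> K \<Longrightarrow> c j \<le> k"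
    and R_decomp: "x = (\<Sum>k\<in>K. R k * x)"
      "\<And>k. k \<in> K \<Longrightarrow> A j * (R k * x) = sc (q powi k) * (R k * x)"
    and R_commute: "\<And>C k. C * A j = A j * C \<Longrightarrow> C * R k = R k * C"
    using eigen_above_decomposition[OF q] by blast
  have y: "(s - k < S \<longrightarrow> R k * x = 0) \<and> (\<forall>i\<in>set js. A i * (R k * x) = sc (q powi c i) * (R k * x))"
    if k: "k \<in> K" for k
    unfolding S_def
  proof (rule Cons.IH)
    show "\<forall>i\<in>set js. \<forall>i'\<in>set js. A i * A i' = A i' * A i"
      using Cons.prems(1) by simp
    show "\<forall>i\<in>set js. eigen_above q (A i) (c i) (R k * x)"
      "prod_list (map A js) * (R k * x) = sc (q powi (s - k)) * (R k * x)"
      using eigen_component_inherits[OF R_commute Cons.prems(1) _ Cons.prems(3) R_decomp(2)[OF k]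
          inj_power_int_nonzero[OF q]] Cons.prems(2) by auto
    show "s - k \<le> sum_list (map c js)"
      using Cons.prems(4) K(2)[OF k] by simp
  qed
  have nonzero: "k = c j \<and> s = c j + S" if "k \<in> K" "R k * x \<noteq> 0" for k
    using y[OF that(1)] K(2)[OF that(1)] that(2) Cons.prems(4) by (auto simp: S_def)
  show ?case
  proof (intro conjI impI ballI)
    assume "s < sum_list (map c (j # js))"
    then have "(\<Sum>k\<in>K. R k * x) = 0"
      using nonzero by (force simp: S_def intro: sum.neutral)
    with R_decomp(1) show "x = 0"
      by (rule trans)
  next
    fix i
    assume "i \<in> set (j # js)"
    then have "A i * (R k * x) = sc (q powi c i) * (R k * x)" if "k \<in> K" for k
      using y[OF that] R_decomp(2)[OF that] nonzero[OF that] by (cases "R k * x = 0") auto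
    then have "A i * (\<Sum>k\<in>K. R k * x) = sc (q powi c i) * (\<Sum>k\<in>K. R k * x)"
      by (rule sum_eigenvectors)
    then show "A i * x = sc (q powi c i) * x"
      by (simp only: R_decomp(1)[symmetric])
  qed
qed

lemma prod_list_minus_sc_eigen:
  assumes "A * x = sc e * x"
  shows "prod_list (map (\<lambda>j. A - sc (f j)) js) * x = sc (prod_list (map (\<lambda>j. e - f j) js)) * x"
proof (induction js)
  case (Cons j js)
  have "prod_list (map (\<lambda>j. A - sc (f j)) (j # js)) * x
      = sc (prod_list (map (\<lambda>j. e - f j) js)) * ((A - sc (f j)) * x)"
    using Cons.IH by (simp add: mult.assoc sc_left_commute[of "A - sc (f j)"])
  also have "\<dots> = sc (prod_list (map (\<lambda>j. e - f j) js) * (e - f j)) * x"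
    using assms by (simp add: left_diff_distrib right_diff_distrib mult.assoc)
  finally show ?case
    by (simp add: mult.commute)
qed simp

end

lemma vv_power: "vv ^ k = Fract (monom 1 k) 1"
  by (induct k) (simp_all add: vv_def One_fract_def monom_Suc mult.commute)

lemma vv_nonzero: "vv \<noteq> 0"
  by (simp add: vv_def Zero_fract_def eq_fract)

lemma vv_power_eq_1_iff: "vv ^ k = 1 \<longleftrightarrow> k = 0"
  by (simp add: vv_power One_fract_def eq_fract monom_eq_1_iff)

lemma inj_power_int_vv: "inj (power_int vv)"
proof -
  have "a = b" if "a < b" "vv powi a = vv powi b" for a b :: int
  proof -
    have "vv ^ nat (b - a) = vv powi (b - a)"
      using \<open>a < b\<close> by (simp add: power_int_def)
    also have "\<dots> = vv powi b / vv powi a"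
      using vv_nonzero by (simp add: power_int_diff)
    also have "\<dots> = 1"
      using that(2) vv_nonzero by (simp add: power_int_eq_0_iff)
    finally show ?thesis
      using \<open>a < b\<close> vv_power_eq_1_iff by simp
  qed
  then show ?thesis
    by (metis injI linorder_neqE)
qed

lemma vv_minus_inverse_nonzero: "vv - inverse vv \<noteq> 0"
proof
  assume "vv - inverse vv = 0"
  then have "vv ^ 2 = 1"
    using vv_nonzero by (simp add: field_simps power2_eq_square)
  then show False
    using vv_power_eq_1_iff by simp
qed

lemma vv_plus_inverse_nonzero: "vv + inverse vv \<noteq> 0"
proof
  assume "vv + inverse vv = 0"
  then have "vv ^ 2 = -1"
    using vv_nonzero by (simp add: field_simps power2_eq_square)
  then have "vv ^ 4 = 1"
    using power_mult[of vv 2 2] by simp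
  then show False
    using vv_power_eq_1_iff by simp
qed

lemma qv_algebra_central_scalars: "qv_algebra sc \<Longrightarrow> central_scalars sc"
  unfolding qv_algebra_def central_scalars_def by blast

definition qint :: "int \<Rightarrow> qv" where
  "qint d = (vv powi d - vv powi (- d)) / (vv - inverse vv)"

lemma qint_0 [simp]: "qint 0 = 0"
  by (simp add: qint_def)

lemma qint_neg1 [simp]: "qint (-1) = -1"
  using vv_minus_inverse_nonzero by (simp add: qint_def power_int_minus divide_eq_minus_1_iff)

lemma qint_2 [simp]: "qint 2 = vv + inverse vv"
proof -
  have "vv powi 2 - vv powi (-2) = (vv + inverse vv) * (vv - inverse vv)"
    by (simp add: power_int_minus algebra_simps power2_eq_square power_inverse)
  then show ?thesis
    using vv_minus_inverse_nonzero by (simp add: qint_def)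
qed

section \<open>Weight vectors\<close>

locale T_algebra = central_scalars sc for sc :: "qv \<Rightarrow> 'a::ring_1" +
  fixes n r :: nat and E F K Ki :: "nat \<Rightarrow> 'a"
  assumes T_rel: "T_relations sc n r E F K Ki" and n_ge_2: "2 \<le> n"
begin

lemma K_commute: "i \<in> {1..n} \<Longrightarrow> j \<in> {1..n} \<Longrightarrow> K i * K j = K j * K i"
  using T_rel unfolding T_relations_def by (elim conjE) blast

lemma K_Ki: "i \<in> {1..n} \<Longrightarrow> K i * Ki i = 1"
  using T_rel unfolding T_relations_def by (elim conjE) blast

lemma Ki_K: "i \<in> {1..n} \<Longrightarrow> Ki i * K i = 1"
  using T_rel unfolding T_relations_def by (elim conjE) blast

lemma K_E: "i \<in> {1..n} \<Longrightarrow> j \<in> {1..n} \<Longrightarrow> K i * E j = sc (vv powi epsp n i j) * E j * K i"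
  using T_rel unfolding T_relations_def by (elim conjE) blast

lemma K_F: "i \<in> {1..n} \<Longrightarrow> j \<in> {1..n} \<Longrightarrow> K i * F j = sc (vv powi (- epsp n i j)) * F j * K i"
  using T_rel unfolding T_relations_def by (elim conjE) blast

lemma E_F_commutator: "i \<in> {1..n} \<Longrightarrow> j \<in> {1..n} \<Longrightarrow> E i * F j - F j * E i =
    (if i = j then sc (inverse (vv - inverse vv)) * (K i * Ki (nxt n i) - Ki i * K (nxt n i)) else 0)"
  using T_rel unfolding T_relations_def by (elim conjE) blast

lemma E_E_commute:
  "i \<in> {1..n} \<Longrightarrow> j \<in> {1..n} \<Longrightarrow> j \<noteq> nxt n i \<Longrightarrow> j \<noteq> prv n i \<Longrightarrow> E i * E j = E j * E i"
  using T_rel unfolding T_relations_def by (elim conjE) blast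

lemma E_serre: "i \<in> {1..n} \<Longrightarrow> j \<in> {1..n} \<Longrightarrow> j = prv n i \<Longrightarrow>
    E i * E i * E j - sc (vv + inverse vv) * E i * E j * E i + E j * E i * E i = 0"
  using T_rel unfolding T_relations_def by (elim conjE) blast

lemma K_prod: "prod_list (map K [1..<n+1]) = sc (vv ^ r)"
  using T_rel unfolding T_relations_def by (elim conjE) blast

lemma K_min_poly: "i \<in> {1..n} \<Longrightarrow> prod_list (map (\<lambda>j. K i - sc (vv ^ j)) [0..<r+1]) = 0"
  using T_rel unfolding T_relations_def by (elim conjE) blast

lemma F_E_commute:
  assumes "i \<in> {1..n}" "j \<in> {1..n}" "i \<noteq> j"
  shows "F j * E i = E i * F j"
proof -
  have "E i * F j - F j * E i = 0"
    using E_F_commutator[OF assms(1,2)] by (simp only: assms(3) if_False)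
  then show ?thesis
    by simp
qed

lemma K_Ki_commute:
  assumes "i \<in> {1..n}" "j \<in> {1..n}"
  shows "K j * Ki i = Ki i * K j"
proof -
  have "Ki i * K j = Ki i * K j * (K i * Ki i)"
    using K_Ki[OF assms(1)] by simp
  also have "\<dots> = Ki i * (K j * K i) * Ki i"
    by (simp add: mult.assoc)
  also have "\<dots> = (Ki i * K i) * K j * Ki i"
    using K_commute[OF assms] by (simp add: mult.assoc)
  also have "\<dots> = K j * Ki i"
    using Ki_K[OF assms(1)] by simp
  finally show ?thesis
    by simp
qed

definition weight :: "(nat \<Rightarrow> int) \<Rightarrow> 'a \<Rightarrow> bool" where
  "weight la x \<longleftrightarrow> (\<forall>i\<in>{1..n}. K i * x = sc (vv powi la i) * x)"

lemma weight_cong: "weight la x \<Longrightarrow> (\<And>i. i \<in> {1..n} \<Longrightarrow> la i = la' i) \<Longrightarrow> weight la' x"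
  by (simp add: weight_def)

lemma weight_E:
  assumes "weight la x" "j \<in> {1..n}"
  shows "weight (\<lambda>i. la i + epsp n i j) (E j * x)"
  unfolding weight_def
proof
  fix i
  assume i: "i \<in> {1..n}"
  have "K i * (E j * x) = sc (vv powi epsp n i j) * (E j * (K i * x))"
    by (simp add: K_E[OF i assms(2)] flip: mult.assoc)
  also have "\<dots> = sc (vv powi epsp n i j) * (E j * (sc (vv powi la i) * x))"
    using assms(1) i by (simp add: weight_def)
  also have "\<dots> = sc (vv powi epsp n i j * vv powi la i) * (E j * x)"
    by (simp add: sc_left_commute[of "E j"] mult.assoc)
  finally show "K i * (E j * x) = sc (vv powi (la i + epsp n i j)) * (E j * x)"
    using vv_nonzero by (simp add: power_int_add mult.commute)
qed

lemma weight_F: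
  assumes "weight la x" "j \<in> {1..n}"
  shows "weight (\<lambda>i. la i - epsp n i j) (F j * x)"
  unfolding weight_def
proof
  fix i
  assume i: "i \<in> {1..n}"
  have "K i * (F j * x) = sc (vv powi (- epsp n i j)) * (F j * (K i * x))"
    by (simp add: K_F[OF i assms(2)] flip: mult.assoc)
  also have "\<dots> = sc (vv powi (- epsp n i j)) * (F j * (sc (vv powi la i) * x))"
    using assms(1) i by (simp add: weight_def)
  also have "\<dots> = sc (vv powi (- epsp n i j) * vv powi la i) * (F j * x)"
    by (simp add: sc_left_commute[of "F j"] mult.assoc)
  finally show "K i * (F j * x) = sc (vv powi (la i - epsp n i j)) * (F j * x)"
    using vv_nonzero by (simp add: power_int_diff power_int_minus divide_inverse mult.commute)
qed

lemma weight_Ki: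
  assumes "weight la x" "i \<in> {1..n}"
  shows "Ki i * x = sc (vv powi (- la i)) * x"
proof -
  have "sc (vv powi (- la i)) * x = sc (vv powi (- la i)) * (Ki i * (K i * x))"
    using Ki_K[OF assms(2)] by (simp flip: mult.assoc)
  also have "\<dots> = Ki i * (sc (vv powi (- la i) * vv powi la i) * x)"
    using assms by (simp add: weight_def sc_left_commute[of "Ki i"] mult.assoc)
  also have "vv powi (- la i) * vv powi la i = 1"
    using vv_nonzero by (simp add: power_int_minus)
  finally show ?thesis
    by simp
qed

lemma weight_E_word:
  assumes "weight la x" "set js \<subseteq> {1..n}"
  shows "weight (\<lambda>k. la k + sum_list (map (epsp n k) js)) (prod_list (map E js) * x)"
  using assms(2)
proof (induction js)
  case (Cons j js)
  then have "weight (\<lambda>k. (la k + sum_list (map (epsp n k) js)) + epsp n k j) (E j * (prod_list (map E js) * x))"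
    by (intro weight_E) auto
  then have "weight (\<lambda>k. la k + sum_list (map (epsp n k) (j # js))) (E j * (prod_list (map E js) * x))"
    by (rule weight_cong) simp
  then show ?case
    by (simp add: mult.assoc)
qed (use assms(1) in simp)

lemma weight_out_of_range:
  assumes "weight la x" "i \<in> {1..n}" "la i \<notin> {0..int r}"
  shows "x = 0"
proof -
  have "K i * x = sc (vv powi la i) * x"
    using assms(1,2) by (simp add: weight_def)
  then have "prod_list (map (\<lambda>j. K i - sc (vv ^ j)) [0..<r+1]) * x
      = sc (prod_list (map (\<lambda>j. vv powi la i - vv ^ j) [0..<r+1])) * x"
    by (rule prod_list_minus_sc_eigen)
  then have "sc (prod_list (map (\<lambda>j. vv powi la i - vv ^ j) [0..<r+1])) * x = 0"
    using K_min_poly[OF assms(2)] by (metis mult_zero_left)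
  moreover have "0 \<notin> set (map (\<lambda>j. vv powi la i - vv ^ j) [0..<r+1])"
  proof
    assume "0 \<in> set (map (\<lambda>j. vv powi la i - vv ^ j) [0..<r+1])"
    then obtain j where j: "j \<in> set [0..<r+1]" "0 = vv powi la i - vv ^ j"
      unfolding set_map by (rule imageE)
    then have "la i = int j"
      using injD[OF inj_power_int_vv, of "la i" "int j"] by simp
    with j(1) assms(3) show False
      by simp
  qed
  then have "prod_list (map (\<lambda>j. vv powi la i - vv ^ j) [0..<r+1]) \<noteq> 0"
    by (simp only: prod_list_zero_iff not_False_eq_True)
  ultimately show ?thesis
    using sc_mult_eq_0 by blast
qed

lemma weight_E_F_commutator:
  assumes "weight la x" "j \<in> {1..n}" "j < n"
  shows "E j * (F j * x) - F j * (E j * x) = sc (qint (la j - la (j+1))) * x"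
proof -
  have j1: "j + 1 \<in> {1..n}" "nxt n j = j + 1"
    using assms(2,3) by (auto simp: nxt_def)
  have "(K j * Ki (j+1) - Ki j * K (j+1)) * x
      = sc (vv powi la j * vv powi (- la (j+1)) - vv powi (- la j) * vv powi la (j+1)) * x"
    using assms(1,2) j1(1) weight_Ki[OF assms(1)]
    by (simp add: weight_def left_diff_distrib mult.assoc sc_left_commute[of "K _"] sc_left_commute[of "Ki _"] sc_commute)
  also have "vv powi la j * vv powi (- la (j+1)) - vv powi (- la j) * vv powi la (j+1)
      = vv powi (la j - la (j+1)) - vv powi (- (la j - la (j+1)))"
    using vv_nonzero by (simp add: power_int_add[symmetric])
  finally have calculation_K: "(K j * Ki (j+1) - Ki j * K (j+1)) * x
      = sc (vv powi (la j - la (j+1)) - vv powi (- (la j - la (j+1)))) * x" .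
  have "E j * (F j * x) - F j * (E j * x) = (E j * F j - F j * E j) * x"
    by (simp add: left_diff_distrib mult.assoc)
  also have "\<dots> = sc (inverse (vv - inverse vv)) * ((K j * Ki (j+1) - Ki j * K (j+1)) * x)"
    using E_F_commutator[OF assms(2,2)] j1(2) by (simp add: mult.assoc)
  also have "\<dots> = sc (inverse (vv - inverse vv) * (vv powi (la j - la (j+1)) - vv powi (- (la j - la (j+1))))) * x"
    by (simp only: calculation_K sc_mult mult.assoc)
  also have "inverse (vv - inverse vv) * (vv powi (la j - la (j+1)) - vv powi (- (la j - la (j+1))))
      = qint (la j - la (j+1))"
    by (simp add: qint_def divide_inverse mult.commute)
  finally show ?thesis .
qed

lemma prv_neq: "1 \<le> k \<Longrightarrow> prv n k \<noteq> k"
  using n_ge_2 by (auto simp: prv_def)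

lemma sum_list_epsp:
  assumes "distinct js" "1 \<le> k"
  shows "sum_list (map (epsp n k) js) = of_bool (k \<in> set js) - of_bool (prv n k \<in> set js)"
  using assms prv_neq[OF assms(2)] by (induction js) (auto simp: epsp_def)

lemma weight_E_word_all:
  assumes "weight la x" "distinct js" "set js = {1..n}"
  shows "weight la (prod_list (map E js) * x)"
proof -
  have "weight (\<lambda>k. la k + sum_list (map (epsp n k) js)) (prod_list (map E js) * x)"
    using weight_E_word[OF assms(1)] assms(3) by simp
  then show ?thesis
    by (rule weight_cong) (auto simp: sum_list_epsp[OF assms(2)] assms(3) prv_def)
qed

section \<open>The idempotent \<open>1_\<omega>\<close>\<close>

abbreviation one_omega :: 'a where
  "one_omega \<equiv> one_lam sc n K Ki (omega r)"

definition omega_factor :: "nat \<Rightarrow> 'a" where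
  "omega_factor j = (if j \<le> r then (K j - Ki j) * sc (inverse (vv - inverse vv)) else 1)"

lemma one_omega_eq: "one_omega = prod_list (map omega_factor [1..<n+1])"
  unfolding one_lam_def omega_def omega_factor_def
  by (intro arg_cong[where f = prod_list] map_cong) auto

lemma K_commute_omega_factor:
  assumes "i \<in> {1..n}" "j \<in> {1..n}"
  shows "omega_factor j * K i = K i * omega_factor j"
proof -
  have KK: "K i * (K j - Ki j) = (K j - Ki j) * K i"
    using K_commute[OF assms] K_Ki_commute[OF assms(2,1)] by (simp add: algebra_simps)
  have "(K j - Ki j) * sc c * K i = ((K j - Ki j) * K i) * sc c" for c
    by (simp add: mult.assoc sc_central[of c "K i"])
  also have "((K j - Ki j) * K i) * sc c = K i * ((K j - Ki j) * sc c)" for c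
    by (simp only: KK[symmetric] mult.assoc)
  finally show ?thesis
    by (simp add: omega_factor_def)
qed

lemma one_omega_annihilator:
  assumes i: "i \<in> {1..n}" "i \<le> r"
  shows "prod_list (map (\<lambda>k. K i - sc (vv ^ k)) [1..<r+1]) * one_omega = 0"
proof -
  define Z where "Z = prod_list (map (\<lambda>k. K i - sc (vv ^ k)) [1..<r+1])"
  have "Z * (K i - 1) = (K i - 1) * Z"
    unfolding Z_def by (rule commute_prod_list_minus_sc[symmetric]) (simp add: algebra_simps)
  also have "(K i - 1) * Z = prod_list (map (\<lambda>k. K i - sc (vv ^ k)) [0..<r+1])"
    unfolding Z_def by (simp add: upt_conv_Cons del: upt_Suc)
  finally have "Z * (K i - 1) = 0"
    using K_min_poly[OF i(1)] by simp
  moreover have "K i - Ki i = (K i - 1) * ((K i + 1) * Ki i)"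
    using K_Ki[OF i(1)] by (simp add: algebra_simps)
  ultimately have "Z * omega_factor i = 0"
    using i(2) by (simp add: omega_factor_def flip: mult.assoc)
  moreover have "omega_factor i \<in> set (map omega_factor [1..<n+1])"
    unfolding set_map using i(1) by (intro imageI) auto
  moreover have "Z * h = h * Z" if h: "h \<in> set (map omega_factor [1..<n+1])" for h
  proof -
    obtain j where "j \<in> set [1..<n+1]" "h = omega_factor j"
      using h unfolding set_map by (rule imageE)
    then have "h * K i = K i * h"
      using K_commute_omega_factor[OF i(1), of j] by auto
    then show ?thesis
      unfolding Z_def by (rule commute_prod_list_minus_sc[symmetric])
  qed
  ultimately show ?thesis
    unfolding one_omega_eq Z_def[symmetric] by (rule left_annihilates_prod_list)
qed

lemma eigen_above_one_omega:
  assumes i: "i \<in> {1..n}"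
  shows "eigen_above vv (K i) (int (omega r i)) one_omega"
proof (cases "i \<le> r")
  case True
  have "prod_list (map (\<lambda>k. K i - sc (vv powi k)) (map int [1..<r+1])) * one_omega = 0"
    using one_omega_annihilator[OF i True] by (simp add: comp_def)
  then show ?thesis
    unfolding eigen_above_def using True
    by (intro exI[of _ "map int [1..<r+1]"]) (auto simp: distinct_map omega_def)
next
  case False
  have "prod_list (map (\<lambda>k. K i - sc (vv powi k)) (map int [0..<r+1])) * one_omega = 0"
    using K_min_poly[OF i] by (simp add: comp_def)
  then show ?thesis
    unfolding eigen_above_def using False
    by (intro exI[of _ "map int [0..<r+1]"]) (auto simp: distinct_map omega_def)
qed

lemma sum_list_omega: "sum_list (map (\<lambda>i. int (omega r i)) [1..<m+1]) = int (min m r)"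
  by (induct m) (auto simp: omega_def)

text \<open>The central relation \<open>K 1 \<cdots> K n = v^r\<close> pins every eigenvalue of \<open>K i\<close> on \<open>1_\<omega>\<close> to its
  lower bound \<open>v^(\<omega> i)\<close>.\<close>
lemma one_omega_weight:
  assumes "r \<le> n"
  shows "weight (\<lambda>i. int (omega r i)) one_omega"
proof -
  have "(int r < sum_list (map (\<lambda>j. int (omega r j)) [1..<n+1]) \<longrightarrow> one_omega = 0)
      \<and> (\<forall>j\<in>set [1..<n+1]. K j * one_omega = sc (vv powi int (omega r j)) * one_omega)"
  proof (rule joint_eigenvalues_from_product[OF inj_power_int_vv, where js = "[1..<n+1]" and A = K
        and c = "\<lambda>j. int (omega r j)" and x = one_omega and s = "int r"])
    show "\<forall>i\<in>set [1..<n+1]. \<forall>j\<in>set [1..<n+1]. K i * K j = K j * K i"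
      using K_commute by auto
    show "\<forall>j\<in>set [1..<n+1]. eigen_above vv (K j) (int (omega r j)) one_omega"
      using eigen_above_one_omega by auto
    show "prod_list (map K [1..<n+1]) * one_omega = sc (vv powi int r) * one_omega"
      using K_prod by simp
    show "int r \<le> sum_list (map (\<lambda>j. int (omega r j)) [1..<n+1])"
      using sum_list_omega[of n] assms by simp
  qed
  then show ?thesis
    unfolding weight_def by auto
qed

lemma one_omega_fixes:
  assumes y: "weight (\<lambda>i. int (omega r i)) y"
  shows "one_omega * y = y"
  unfolding one_omega_eq
proof (rule prod_list_fixes)
  fix g
  assume "g \<in> set (map omega_factor [1..<n+1])"
  then obtain j where j: "j \<in> set [1..<n+1]" "g = omega_factor j"
    unfolding set_map by (rule imageE)
  show "g * y = y"
  proof (cases "j \<le> r")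
    case True
    have "K j * y = sc vv * y" "Ki j * y = sc (inverse vv) * y"
      using y weight_Ki[OF y] j True by (auto simp: weight_def omega_def power_int_minus)
    then have "(K j - Ki j) * y = sc (vv - inverse vv) * y"
      by (simp add: left_diff_distrib)
    moreover have "g * y = sc (inverse (vv - inverse vv)) * ((K j - Ki j) * y)"
      using j True by (simp add: omega_factor_def mult.assoc sc_left_commute[of "K j - Ki j"])
    ultimately show ?thesis
      using sc_inverse_cancel[OF vv_minus_inverse_nonzero, of y] by simp
  next
    case False
    then show ?thesis
      by (simp add: j omega_factor_def)
  qed
qed

section \<open>Moving \<open>F E\<close> through the word of \<open>\<zeta>(T_\<rho>)\<close>\<close>

lemma F_E_commute_E_word:
  assumes j: "j \<in> {1..n}" and ks: "\<And>k. k \<in> set ks \<Longrightarrow> k \<in> {1..n} \<and> k \<noteq> j \<and> k \<noteq> nxt n j \<and> k \<noteq> prv n j"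
  shows "F j * E j * prod_list (map E ks) = prod_list (map E ks) * (F j * E j)"
proof (rule commute_prod_list)
  fix y
  assume "y \<in> set (map E ks)"
  then obtain k where k: "k \<in> set ks" "y = E k"
    unfolding set_map by (rule imageE)
  have "E j * E k = E k * E j"
    using ks[OF k(1)] j by (intro E_E_commute) auto
  moreover have "F j * E k = E k * F j"
    using ks[OF k(1)] j by (intro F_E_commute) auto
  ultimately show "F j * E j * y = y * (F j * E j)"
    using k(2) by (metis mult.assoc)
qed

lemma F_E_lowest_weight:
  assumes Y: "weight mu Y" and a: "a \<in> {1..n}" "a < n" and mu: "mu a = 0" "mu (a + 1) = 1"
  shows "F a * (E a * Y) = Y"
proof -
  have "F a * Y = 0"
    using weight_F[OF Y a(1)] a(1) by (rule weight_out_of_range) (simp add: mu epsp_def)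
  moreover have "mu (Suc a) = 1"
    using mu by simp
  ultimately show ?thesis
    using weight_E_F_commutator[OF Y a] by (simp add: mu)
qed

lemma F_E_E_E_lowest_weight:
  assumes Y: "weight mu Y" and a: "1 \<le> a" "a + 2 \<le> n" and mu: "mu a = 0" "mu (a + 1) = 1"
  shows "F a * (E a * (E (a + 1) * (E a * Y))) = E a * (E (a + 1) * Y)"
proof -
  define b where "b = a + 1"
  have ab: "a \<in> {1..n}" "b \<in> {1..n}" "a < n" "b \<noteq> a"
    using a by (auto simp: b_def)
  have eps: "epsp n a a = 1" "epsp n a b = 0" "epsp n b a = -1" "epsp n b b = 1"
    using a by (auto simp: epsp_def prv_def b_def)
  define W where "W = E b * (E a * Y)"
  have "F a * W = E b * (F a * (E a * Y))"
    using F_E_commute[OF ab(2,1,4)] by (simp add: W_def flip: mult.assoc)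
  also have "\<dots> = E b * Y"
    using F_E_lowest_weight[OF Y ab(1,3) mu] by simp
  finally have FW: "F a * W = E b * Y" .
  have "weight (\<lambda>k. mu k + epsp n k a + epsp n k b) W"
    unfolding W_def by (intro weight_E ab Y)
  from weight_E_F_commutator[OF this ab(1,3)] have "F a * (E a * W) = E a * (F a * W)"
    using mu eps by (simp add: b_def)
  then show ?thesis
    using FW by (simp add: W_def b_def)
qed

lemma E_E_F_E_serre:
  assumes Y: "weight mu Y" and a: "1 \<le> a" "a + 2 \<le> n" and mu: "mu (a + 1) = 1" "mu (a + 2) = 1"
  shows "E (a + 1) * (E a * (F (a + 1) * (E (a + 1) * Y))) = E a * (E (a + 1) * Y)"
proof -
  define b where "b = a + 1"
  have ab: "a \<in> {1..n}" "b \<in> {1..n}" "b + 1 \<in> {1..n}" "b < n" "a = prv n b"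
    using a by (auto simp: b_def prv_def)
  have eps: "epsp n b b = 1" "epsp n b a = -1" "epsp n (Suc b) b = -1"
    using a by (auto simp: epsp_def prv_def b_def)
  have mub: "mu b = 1" "mu (Suc b) = 1"
    using mu by (simp_all add: b_def)
  define Z where "Z = F b * Y"
  have FEY: "F b * (E b * Y) = E b * Z"
    using weight_E_F_commutator[OF Y ab(2,4)] by (simp add: Z_def mub)
  have "E a * Z = 0"
    unfolding Z_def using weight_E[OF weight_F[OF Y ab(2)] ab(1)] ab(2)
    by (rule weight_out_of_range) (simp add: mub eps)
  have EbY: "weight (\<lambda>k. mu k + epsp n k b) (E b * Y)"
    by (rule weight_E[OF Y ab(2)])
  have "E b * (E b * Y) = 0"
    using weight_E[OF EbY ab(2)] ab(3) by (rule weight_out_of_range) (simp add: mub eps)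
  then have EEZ: "E b * (E b * Z) = sc (vv + inverse vv) * (E b * Y)"
    using weight_E_F_commutator[OF EbY ab(2,4)] by (simp add: FEY[symmetric] mub eps)
  have "(E b * E b * E a - sc (vv + inverse vv) * E b * E a * E b + E a * E b * E b) * Z = 0"
    using E_serre[OF ab(2,1,5)] by simp
  then have "sc (vv + inverse vv) * (E b * (E a * (E b * Z))) = sc (vv + inverse vv) * (E a * (E b * Y))"
    using \<open>E a * Z = 0\<close> EEZ by (simp add: algebra_simps sc_left_commute[of "E a"])
  then have "E b * (E a * (E b * Z)) = E a * (E b * Y)"
    by (metis sc_inverse_cancel vv_plus_inverse_nonzero)
  then show ?thesis
    using FEY by (simp add: b_def)
qed

definition rho_word :: 'a where
  "rho_word = prod_list (map E [r..<n]) * prod_list (map E (rev [1..<r])) * E n"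

lemma rho_word_weight:
  assumes "1 \<le> r" "r < n"
  shows "weight (\<lambda>i. int (omega r i)) (rho_word * one_omega)"
proof -
  have "weight (\<lambda>i. int (omega r i)) (prod_list (map E ([r..<n] @ rev [1..<r] @ [n])) * one_omega)"
    using assms by (intro weight_E_word_all one_omega_weight) auto
  then show ?thesis
    by (simp add: rho_word_def mult.assoc)
qed

lemma lower_word_weight:
  assumes "1 < i" "i < r" "r < n"
  shows "\<exists>mu. weight mu (prod_list (map E (rev [1..<i - 1] @ [n])) * one_omega)
    \<and> mu (i - 1) = 0 \<and> mu i = 1 \<and> mu (i + 1) = 1"
proof -
  define mu where "mu k = int (omega r k) + sum_list (map (epsp n k) (rev [1..<i - 1] @ [n]))" for k
  have "weight mu (prod_list (map E (rev [1..<i - 1] @ [n])) * one_omega)"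
    unfolding mu_def using assms by (intro weight_E_word one_omega_weight) auto
  moreover have mu_eq: "mu k = int (omega r k) + of_bool (k \<in> {1..<i - 1} \<union> {n})
      - of_bool (prv n k \<in> {1..<i - 1} \<union> {n})" if "1 \<le> k" for k
    unfolding mu_def using assms that by (subst sum_list_epsp) auto
  ultimately show ?thesis
    using assms by (intro exI[of _ mu]) (auto simp: mu_eq prv_def omega_def)
qed

lemma F_E_rho_word:
  assumes "1 < i" "i < r" "r < n"
  shows "F (i - 1) * E (i - 1) * (rho_word * one_omega) = rho_word * (F i * E i * one_omega)"
proof -
  define a where "a = i - 1"
  have a: "i = a + 1" "1 \<le> a" "a + 2 \<le> n" "a \<in> {1..n}" "i \<in> {1..n}"
    using assms by (auto simp: a_def)
  define U where "U = prod_list (map E ([r..<n] @ rev [i+1..<r]))"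
  define V where "V = prod_list (map E (rev [1..<a] @ [n]))"
  define Y where "Y = V * one_omega"
  have "[1..<r] = [1..<a] @ [a..<r]"
    using upt_add_eq_append[of 1 a "r - a"] assms by (simp add: a_def)
  also have "[a..<r] = a # i # [i+1..<r]"
    using assms by (simp add: a_def upt_conv_Cons)
  finally have rho: "rho_word = U * (E i * (E a * V))"
    by (simp add: rho_word_def U_def V_def mult.assoc)
  obtain mu where "weight mu Y" "mu a = 0" "mu i = 1" "mu (i + 1) = 1"
    using lower_word_weight[OF assms] unfolding Y_def V_def a_def by blast
  then have key: "F a * (E a * (E i * (E a * Y))) = E i * (E a * (F i * (E i * Y)))"
    using F_E_E_E_lowest_weight[of mu Y a] E_E_F_E_serre[of mu Y a] a(1-3) by simp
  have U_comm: "F a * E a * U = U * (F a * E a)"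
    unfolding U_def using assms a(4) by (intro F_E_commute_E_word) (auto simp: a_def nxt_def prv_def)
  have V_comm: "F i * E i * V = V * (F i * E i)"
    unfolding V_def using assms a(5) by (intro F_E_commute_E_word) (auto simp: a_def nxt_def prv_def)
  have FEY: "F i * (E i * Y) = V * (F i * E i * one_omega)"
    unfolding Y_def by (simp only: V_comm mult.assoc[symmetric])
  have "F a * E a * (rho_word * one_omega) = (F a * E a * U) * (E i * (E a * Y))"
    by (simp add: rho Y_def mult.assoc)
  also have "\<dots> = U * (F a * (E a * (E i * (E a * Y))))"
    by (simp only: U_comm) (simp add: mult.assoc)
  also have "\<dots> = U * (E i * (E a * (V * (F i * E i * one_omega))))"
    by (simp only: key FEY)
  also have "\<dots> = rho_word * (F i * E i * one_omega)"
    by (simp add: rho mult.assoc)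
  finally show ?thesis
    by (simp add: a_def)
qed

end

theorem corollary2p3p7:
  fixes sc :: "qv \<Rightarrow> 'a::ring_1" and E F K Ki :: "nat \<Rightarrow> 'a" and n r i :: nat
  assumes "qv_algebra sc"
    and "T_relations sc n r E F K Ki"
    and "r \<ge> 3" and "n > r" and "1 < i" and "i < r"
  shows "zeta_s sc n r E F K Ki (i - 1) * zeta_rho sc n r E K Ki
       = zeta_rho sc n r E K Ki * zeta_s sc n r E F K Ki i"
proof -
  interpret T_algebra sc n r E F K Ki
    using assms by (intro T_algebra.intro T_algebra_axioms.intro qv_algebra_central_scalars) auto
  let ?P = one_omega and ?\<rho> = rho_word and ?a = "i - 1"
  have zeta: "zeta_s sc n r E F K Ki j = (sc vv * (F j * E j) - 1) * ?P"
    "zeta_rho sc n r E K Ki = ?\<rho> * ?P" for j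
    by (simp_all add: zeta_s_def zeta_rho_def rho_word_def mult.assoc)
  have \<omega>: "weight (\<lambda>i. int (omega r i)) ?P"
    using assms by (intro one_omega_weight) simp
  have "weight (\<lambda>k. int (omega r k) + epsp n k i - epsp n k i) (F i * (E i * ?P))"
    using assms by (intro weight_F weight_E \<omega>) auto
  then have P_FEP: "?P * (F i * E i * ?P) = F i * E i * ?P"
    by (simp add: one_omega_fixes mult.assoc)
  have P_\<rho>P: "?P * (?\<rho> * ?P) = ?\<rho> * ?P"
    using assms by (intro one_omega_fixes rho_word_weight) auto
  have "zeta_s sc n r E F K Ki ?a * zeta_rho sc n r E K Ki = sc vv * (F ?a * E ?a * (?\<rho> * ?P)) - ?\<rho> * ?P"
    by (simp add: zeta mult.assoc P_\<rho>P left_diff_distrib)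
  also have "\<dots> = sc vv * (?\<rho> * (F i * E i * ?P)) - ?\<rho> * ?P"
    by (simp only: F_E_rho_word[OF assms(5,6,4)])
  also have "\<dots> = ?\<rho> * (sc vv * (?P * (F i * E i * ?P)) - ?P * ?P)"
    by (simp add: P_FEP one_omega_fixes[OF \<omega>] right_diff_distrib sc_left_commute[of ?\<rho>])
  also have "\<dots> = zeta_rho sc n r E K Ki * zeta_s sc n r E F K Ki i"
    by (simp add: zeta mult.assoc left_diff_distrib right_diff_distrib sc_left_commute[of ?P])
  finally show ?thesis .
qed

end
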